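(* Let $(X_1,X_2)\sim BDEW(\alpha,p,\beta_1,\beta_2,\beta_3)$ with $\alpha>0$, $0<p<1$, $\beta_1,\beta_2,\beta_3>0$. Then $$P(X_1<X_2)=\sum_{i=0}^{\infty}\Big\{[1-p^{(i+2)^{\alpha}}]^{\beta_2}-[1-p^{(i+1)^{\alpha}}]^{\beta_2}\Big\}[1-p^{(i+1)^{\alpha}}]^{\beta_1+\beta_3}.$$
   Context: The exponentiated discrete Weibull distribution $EDW(\alpha,p,\beta)$ ($\alpha,\beta>0$, $0<p<1$) is the distribution on $\mathbb{N}_0=\{0,1,2,\dots\}$ with cumulative distribution function $F_{EDW}(x;\alpha,p,\beta)=[1-p^{([x]+1)^{\alpha}}]^{\beta}$ for real $x\ge 0$, where $[x]$ is the largest integer $\le x$. The bivariate discrete exponentiated Weibull distribution $BDEW(\alpha,p,\beta_1,\beta_2,\beta_3)$ is the distribution of $(X_1,X_2)=(\max\{V_1,V_3\},\max\{V_2,V_3\})$ where $V_1,V_2,V_3$ are independent with $V_i\sim EDW(\alpha,p,\beta_i)$. *)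

theory Defs
  imports "HOL-Probability.Probability"
begin

definition edw_cdf :: "real \<Rightarrow> real \<Rightarrow> real \<Rightarrow> real \<Rightarrow> real" where
  "edw_cdf \<alpha> p \<beta> x = (1 - p powr ((real_of_int \<lfloor>x\<rfloor> + 1) powr \<alpha>)) powr \<beta>"

definition is_EDW :: "'a measure \<Rightarrow> ('a \<Rightarrow> nat) \<Rightarrow> real \<Rightarrow> real \<Rightarrow> real \<Rightarrow> bool" where
  "is_EDW M V \<alpha> p \<beta> \<longleftrightarrow>
     V \<in> measurable M (count_space UNIV) \<and>
     (\<forall>x::real. x \<ge> 0 \<longrightarrow>
        measure M {\<omega> \<in> space M. real (V \<omega>) \<le> x} = edw_cdf \<alpha> p \<beta> x)"

end

theory Submission
  imports Defs
begin

text \<open>The event \<open>X\<^sub>1 < X\<^sub>2\<close> is the disjoint union over \<open>i\<close> of the events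
  \<open>V\<^sub>2 = i + 1, V\<^sub>1 \<le> i, V\<^sub>3 \<le> i\<close>. By independence each has probability
  \<open>P(V\<^sub>2 = i + 1) P(V\<^sub>1 \<le> i) P(V\<^sub>3 \<le> i)\<close>, and at integer arguments the EDW distribution
  function is a power of the same base for all three variables, so the last two factors merge
  into a single power with exponent \<open>\<beta>\<^sub>1 + \<beta>\<^sub>3\<close>.\<close>

lemma max_less_max_iff_nat:
  fixes a b c :: nat
  shows "max a c < max b c \<longleftrightarrow> (\<exists>i. b = Suc i \<and> a \<le> i \<and> c \<le> i)"
proof
  assume "max a c < max b c"
  then show "\<exists>i. b = Suc i \<and> a \<le> i \<and> c \<le> i"
    by (intro exI[of _ "b - 1"]) (auto simp: max_def split: if_splits)
qed auto

lemma is_EDW_measure_atMost: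
  assumes "is_EDW M V \<alpha> p \<beta>"
  shows "measure M {\<omega> \<in> space M. V \<omega> \<le> n} = (1 - p powr ((real n + 1) powr \<alpha>)) powr \<beta>"
proof -
  have "measure M {\<omega> \<in> space M. real (V \<omega>) \<le> real n} = edw_cdf \<alpha> p \<beta> (real n)"
    using assms unfolding is_EDW_def by (metis of_nat_0_le_iff)
  then show ?thesis by (simp add: edw_cdf_def)
qed

lemma (in finite_measure) measure_nat_eq_Suc:
  fixes X :: "'a \<Rightarrow> nat"
  assumes "X \<in> measurable M (count_space UNIV)"
  shows "measure M {\<omega> \<in> space M. X \<omega> = Suc n} =
    measure M {\<omega> \<in> space M. X \<omega> \<le> Suc n} - measure M {\<omega> \<in> space M. X \<omega> \<le> n}"
proof -
  have "{\<omega> \<in> space M. X \<omega> \<le> Suc n} = {\<omega> \<in> space M. X \<omega> \<le> n} \<union> {\<omega> \<in> space M. X \<omega> = Suc n}"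
    by auto
  moreover have "measure M ({\<omega> \<in> space M. X \<omega> \<le> n} \<union> {\<omega> \<in> space M. X \<omega> = Suc n}) =
      measure M {\<omega> \<in> space M. X \<omega> \<le> n} + measure M {\<omega> \<in> space M. X \<omega> = Suc n}"
    using assms by (intro finite_measure_Union) auto
  ultimately show ?thesis by simp
qed

lemma (in prob_space) prob_max_less_max_sums:
  fixes V :: "nat \<Rightarrow> 'a \<Rightarrow> nat"
  assumes indep: "indep_vars (\<lambda>_. count_space UNIV) V {1,2,3}"
  shows "(\<lambda>i. prob {\<omega> \<in> space M. V 2 \<omega> = Suc i} *
              (prob {\<omega> \<in> space M. V 1 \<omega> \<le> i} * prob {\<omega> \<in> space M. V 3 \<omega> \<le> i}))
    sums prob {\<omega> \<in> space M. max (V 1 \<omega>) (V 3 \<omega>) < max (V 2 \<omega>) (V 3 \<omega>)}"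
proof -
  define A where "A i j = V j -` (if j = 2 then {Suc i} else {..i}) \<inter> space M" for i j
  define S where "S i = (\<Inter>j\<in>{1,2,3}. A i j)" for i
  have "V j \<in> measurable M (count_space UNIV)" if "j \<in> {1,2,3}" for j
    using indep that unfolding indep_vars_def by blast
  then have "S i \<in> sets M" for i
    unfolding S_def A_def by (intro sets.finite_INT) (auto simp: measurable_sets)
  moreover have "disjoint_family S"
    unfolding disjoint_family_on_def S_def A_def by auto
  ultimately have "(\<lambda>i. prob (S i)) sums prob (\<Union>i. S i)"
    by (intro finite_measure_UNION) auto
  moreover have "prob (S i) = prob {\<omega> \<in> space M. V 2 \<omega> = Suc i} *
      (prob {\<omega> \<in> space M. V 1 \<omega> \<le> i} * prob {\<omega> \<in> space M. V 3 \<omega> \<le> i})" for i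
  proof -
    have "prob (S i) = (\<Prod>j\<in>{1,2,3}. prob (A i j))"
      unfolding S_def A_def by (rule indep_varsD_finite[OF indep]) auto
    moreover have "A i 1 = {\<omega> \<in> space M. V 1 \<omega> \<le> i}" "A i 2 = {\<omega> \<in> space M. V 2 \<omega> = Suc i}"
      "A i 3 = {\<omega> \<in> space M. V 3 \<omega> \<le> i}"
      unfolding A_def by auto
    ultimately show ?thesis by simp
  qed
  moreover have "(\<Union>i. S i) = {\<omega> \<in> space M. max (V 1 \<omega>) (V 3 \<omega>) < max (V 2 \<omega>) (V 3 \<omega>)}"
    unfolding S_def A_def max_less_max_iff_nat by auto
  ultimately show ?thesis by simp
qed

theorem mainTheorem4:
  fixes M :: "'a measure" and V :: "nat \<Rightarrow> 'a \<Rightarrow> nat"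
    and \<alpha> p :: real and \<beta> :: "nat \<Rightarrow> real"
  assumes "prob_space M"
    and "\<alpha> > 0" and "0 < p" and "p < 1"
    and "\<forall>i\<in>{1,2,3}. \<beta> i > 0"
    and "prob_space.indep_vars M (\<lambda>_. count_space UNIV) V {1,2,3}"
    and "\<forall>i\<in>{1,2,3}. is_EDW M (V i) \<alpha> p (\<beta> i)"
  shows "measure M {\<omega> \<in> space M. max (V 1 \<omega>) (V 3 \<omega>) < max (V 2 \<omega>) (V 3 \<omega>)} =
    (\<Sum>i::nat. ((1 - p powr ((real i + 2) powr \<alpha>)) powr (\<beta> 2)
                 - (1 - p powr ((real i + 1) powr \<alpha>)) powr (\<beta> 2))
               * (1 - p powr ((real i + 1) powr \<alpha>)) powr (\<beta> 1 + \<beta> 3))"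
proof -
  interpret prob_space M by fact
  have cdf: "prob {\<omega> \<in> space M. V j \<omega> \<le> n} = (1 - p powr ((real n + 1) powr \<alpha>)) powr \<beta> j"
    if "j \<in> {1,2,3}" for j n
    using assms(7) that by (blast intro: is_EDW_measure_atMost)
  have pmf: "prob {\<omega> \<in> space M. V 2 \<omega> = Suc n} =
      (1 - p powr ((real n + 2) powr \<alpha>)) powr \<beta> 2 - (1 - p powr ((real n + 1) powr \<alpha>)) powr \<beta> 2"
    for n
    using assms(7) cdf[of 2] unfolding is_EDW_def
    by (simp add: measure_nat_eq_Suc add.commute)
  show ?thesis
    using prob_max_less_max_sums[OF assms(6)]
    by (simp add: pmf cdf powr_add sums_iff)
qed

end
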